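(* Fix $\chi \in C_c^\infty((0,1))$. There is a function $g_\chi:(0,\infty) \to [0,\infty)$ depending only on $\chi$ such that: for every $N \in \mathbb N$, every $a \in \mathbb Z_N \simeq \{0,\dots,N-1\}$ and every $r \in (0,1/2)$ with $d(a/N, 0) \ge r$, $$\Big| \sum_{m=0}^{N-1} \exp\Big(\frac{2\pi i a m}{N}\Big) \chi\Big(\frac mN\Big)\Big| \le N \cdot g_\chi(Nr);$$ moreover, for every $n \ge 0$ there is $C_n>0$ (depending only on $\chi$) with $g_\chi(x) \le C_n x^{-n}$ for all $x>0$, and if $\chi \in \mathcal G^s_c((0,1))$ for some $s>1$ then there are $C, c > 0$ (depending only on $\chi$) with $g_\chi(x) \le C e^{-c x^{1/s}}$ for all $x > 0$.
   Context: On $[0,1]$ with $0$ and $1$ identified, $d(x,y) = \min\{|x-y|, 1 - |x-y|\}$. For $s>1$, $\mathcal G^s_c((0,1))$ is the set of $f \in C_c^\infty(\mathbb R)$ with $\operatorname{supp} f \subset (0,1)$ such that for every compact $K' \subset \mathbb R$ there is $C_{K',f}$ with $\sup_{x \in K'}|\partial^\alpha f(x)| \le C_{K',f}^{\alpha+1}(\alpha!)^s$ for all integers $\alpha \ge 0$. *)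

theory Defs
  imports "HOL-Analysis.Analysis"
begin

text \<open>Distance on [0,1] with 0 and 1 identified.\<close>
definition circ_dist :: "real \<Rightarrow> real \<Rightarrow> real" where
  "circ_dist x y = min \<bar>x - y\<bar> (1 - \<bar>x - y\<bar>)"

definition smooth_real :: "(real \<Rightarrow> real) \<Rightarrow> bool" where
  "smooth_real f \<longleftrightarrow> (\<forall>k x. ((deriv ^^ k) f) differentiable (at x))"

definition Cc_inf_01 :: "(real \<Rightarrow> real) \<Rightarrow> bool" where
  "Cc_inf_01 f \<longleftrightarrow> smooth_real f \<and> compact (closure {x. f x \<noteq> 0})
      \<and> closure {x. f x \<noteq> 0} \<subseteq> {0<..<1}"

definition Gevrey_c_01 :: "real \<Rightarrow> (real \<Rightarrow> real) \<Rightarrow> bool" where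
  "Gevrey_c_01 s f \<longleftrightarrow> Cc_inf_01 f \<and>
     (\<forall>K. compact K \<longrightarrow> (\<exists>C. \<forall>(\<alpha>::nat). \<forall>x\<in>K.
        \<bar>(deriv ^^ \<alpha>) f x\<bar> \<le> C ^ (\<alpha> + 1) * (fact \<alpha>) powr s))"

end

theory Submission
  imports Defs
begin

text \<open>
  Put w = exp (2 pi i a / N) and h = 1 / N. Since chi vanishes outside (0,1), summation by parts
  k times turns (1 - w)^k times the sum into the sum over m < N + k of w^m times the k-th backward
  difference of chi with step h at m / N, and by the mean value theorem that difference is at most
  h^k sup |chi^(k)|. As |1 - w| = 2 |sin (pi a / N)| >= 2 r, the sum is at most
  N (k + 1) sup |chi^(k)| / (2 N r)^k for every k, and g is the infimum of these bounds over k,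
  taken at x = N r. Fixing k = n gives decay of order x^(-n). For Gevrey chi,
  sup |chi^(k)| <= A^(k+1) (k!)^s, and k close to c x^(1/s) makes the k-th bound O(e^(-k)).
\<close>

definition backward_diff :: "real \<Rightarrow> (real \<Rightarrow> real) \<Rightarrow> real \<Rightarrow> real" where
  "backward_diff h f t = f t - f (t - h)"

lemma has_real_derivative_backward_diff:
  fixes f :: "real \<Rightarrow> real"
  assumes "\<And>x. f differentiable (at x)"
  shows "(backward_diff h f has_real_derivative backward_diff h (deriv f) x) (at x)"
proof -
  have "(f has_real_derivative deriv f y) (at y)" for y
    using assms DERIV_deriv_iff_real_differentiable by blast
  then have "((\<lambda>t. f (t - h)) has_real_derivative deriv f (x - h)) (at x)"
    using DERIV_shift[of f "deriv f (x - h)" x "- h"] by simp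
  with \<open>(f has_real_derivative deriv f x) (at x)\<close> show ?thesis
    unfolding backward_diff_def by (auto intro: derivative_eq_intros)
qed

lemma higher_deriv_backward_diff:
  assumes "smooth_real f"
  shows "(deriv ^^ k) (backward_diff h f) = backward_diff h ((deriv ^^ k) f)"
proof (induction k)
  case (Suc k)
  have "\<And>x. (deriv ^^ k) f differentiable (at x)"
    using assms by (simp add: smooth_real_def)
  then have "deriv (backward_diff h ((deriv ^^ k) f)) = backward_diff h ((deriv ^^ Suc k) f)"
    by (intro ext DERIV_imp_deriv) (simp add: has_real_derivative_backward_diff)
  then show ?case using Suc by simp
qed simp

lemma smooth_real_backward_diff:
  assumes "smooth_real f"
  shows "smooth_real (backward_diff h f)"
  unfolding smooth_real_def higher_deriv_backward_diff[OF assms]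
  using assms has_real_derivative_backward_diff real_differentiable_def
  by (metis smooth_real_def)

lemma abs_backward_diff_le:
  fixes f :: "real \<Rightarrow> real"
  assumes "\<And>x. f differentiable (at x)" "\<And>x. \<bar>deriv f x\<bar> \<le> B"
  shows "\<bar>backward_diff h f t\<bar> \<le> \<bar>h\<bar> * B"
  using field_differentiable_bound[of UNIV f "deriv f" B t "t - h"] assms
  by (simp add: backward_diff_def DERIV_deriv_iff_real_differentiable mult.commute)

lemma abs_iterated_backward_diff_le:
  assumes "smooth_real f" "\<And>x. \<bar>(deriv ^^ k) f x\<bar> \<le> B"
  shows "\<bar>(backward_diff h ^^ k) f t\<bar> \<le> \<bar>h\<bar> ^ k * B"
  using assms
proof (induction k arbitrary: f B)
  case (Suc k)
  have "\<And>x. (deriv ^^ k) f differentiable (at x)"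
    using Suc.prems(1) by (simp add: smooth_real_def)
  then have "\<bar>(deriv ^^ k) (backward_diff h f) x\<bar> \<le> \<bar>h\<bar> * B" for x
    unfolding higher_deriv_backward_diff[OF Suc.prems(1)]
    by (rule abs_backward_diff_le) (use Suc.prems(2) in simp)
  from Suc.IH[OF smooth_real_backward_diff[OF Suc.prems(1)] this]
  show ?case by (simp add: funpow_swap1 mult_ac)
qed simp

lemma iterated_backward_diff_eq_0_left:
  assumes "\<And>s. s \<le> b \<Longrightarrow> f s = 0" "h \<ge> 0" "t \<le> b"
  shows "(backward_diff h ^^ k) f t = 0"
  using assms(3)
proof (induction k arbitrary: t)
  case (Suc k)
  then show ?case using assms(2) by (simp add: backward_diff_def)
qed (use assms(1) in simp)

lemma iterated_backward_diff_eq_0_right: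
  assumes "\<And>s. s \<ge> b \<Longrightarrow> f s = 0" "h \<ge> 0" "t \<ge> b + k * h"
  shows "(backward_diff h ^^ k) f t = 0"
  using assms(3)
proof (induction k arbitrary: t)
  case (Suc k)
  then have "t \<ge> b + k * h" "t - h \<ge> b + k * h"
    using assms(2) by (auto simp: algebra_simps)
  then show ?case using Suc.IH by (simp add: backward_diff_def)
qed (use assms(1) in simp)

lemma higher_deriv_eq_0_on_open:
  fixes f :: "real \<Rightarrow> real"
  assumes "open U" "\<And>x. x \<in> U \<Longrightarrow> f x = 0" "x \<in> U"
  shows "(deriv ^^ k) f x = 0"
  using assms(3)
proof (induction k arbitrary: x)
  case (Suc k)
  have "((deriv ^^ k) f has_real_derivative 0) (at x)"
    by (rule has_field_derivative_transform_within_open[of "\<lambda>_. 0", OF _ assms(1) Suc.prems])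
       (use Suc.IH in auto)
  then show ?case by (simp add: DERIV_imp_deriv)
qed (use assms(2) in simp)

lemma higher_deriv_eq_0_outside_support:
  fixes f :: "real \<Rightarrow> real"
  assumes "x \<notin> closure {x. f x \<noteq> 0}"
  shows "(deriv ^^ k) f x = 0"
proof (rule higher_deriv_eq_0_on_open[of "- closure {x. f x \<noteq> 0}"])
  show "f y = 0" if "y \<in> - closure {x. f x \<noteq> 0}" for y
    using that closure_subset[of "{x. f x \<noteq> 0}"] by auto
qed (use assms in auto)

lemma bounded_range_higher_deriv:
  assumes "smooth_real f" "compact (closure {x. f x \<noteq> 0})"
  shows "bounded (range ((deriv ^^ k) f))"
proof -
  let ?K = "closure {x. f x \<noteq> 0}"
  have "continuous_on ?K ((deriv ^^ k) f)"
    using assms(1) by (intro continuous_at_imp_continuous_on ballI differentiable_imp_continuous_within)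
      (auto simp: smooth_real_def)
  then have "bounded ((deriv ^^ k) f ` ?K)"
    using assms(2) by (intro compact_imp_bounded compact_continuous_image)
  moreover have "range ((deriv ^^ k) f) \<subseteq> insert 0 ((deriv ^^ k) f ` ?K)"
    using higher_deriv_eq_0_outside_support by blast
  ultimately show ?thesis
    by (metis bounded_insert bounded_subset)
qed

lemma Cc_inf_01_eq_0:
  assumes "Cc_inf_01 f" "t \<le> 0 \<or> t \<ge> 1"
  shows "f t = 0"
  using assms closure_subset[of "{x. f x \<noteq> 0}"] by (force simp: Cc_inf_01_def)

lemma summation_by_parts_backward_diff:
  fixes E :: "real \<Rightarrow> real" and w :: complex
  assumes "N > 0" "E (- 1 / real N) = 0" "E (real L / real N) = 0"
  shows "(\<Sum>m<Suc L. w ^ m * of_real (backward_diff (1 / real N) E (real m / real N)))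
       = (1 - w) * (\<Sum>m<L. w ^ m * of_real (E (real m / real N)))"
proof -
  have shift: "real (Suc m) / real N - 1 / real N = real m / real N" for m
    using assms(1) by (simp add: field_simps)
  have "(\<Sum>m<Suc L. w ^ m * of_real (backward_diff (1 / real N) E (real m / real N)))
      = (\<Sum>m<Suc L. w ^ m * of_real (E (real m / real N)))
        - (\<Sum>m<Suc L. w ^ m * of_real (E (real m / real N - 1 / real N)))"
    by (simp add: backward_diff_def sum_subtractf algebra_simps)
  also have "(\<Sum>m<Suc L. w ^ m * of_real (E (real m / real N)))
      = (\<Sum>m<L. w ^ m * of_real (E (real m / real N)))"
    using assms(3) by simp
  also have "(\<Sum>m<Suc L. w ^ m * of_real (E (real m / real N - 1 / real N)))
      = w * (\<Sum>m<L. w ^ m * of_real (E (real m / real N)))"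
    unfolding sum.lessThan_Suc_shift using assms(2) shift
    by (simp add: sum_distrib_left mult.assoc)
  finally show ?thesis by (simp add: algebra_simps)
qed

lemma summation_by_parts_iterated_backward_diff:
  fixes f :: "real \<Rightarrow> real" and w :: complex
  assumes "\<And>t. t \<le> 0 \<or> t \<ge> 1 \<Longrightarrow> f t = 0" "N > 0"
  shows "(\<Sum>m<N + k. w ^ m * of_real ((backward_diff (1 / real N) ^^ k) f (real m / real N)))
       = (1 - w) ^ k * (\<Sum>m<N. w ^ m * of_real (f (real m / real N)))"
proof (induction k)
  case (Suc k)
  let ?E = "(backward_diff (1 / real N) ^^ k) f"
  have "?E (- 1 / real N) = 0"
    by (rule iterated_backward_diff_eq_0_left[of 0]) (use assms(1) in auto)
  moreover have "?E (real (N + k) / real N) = 0"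
    by (rule iterated_backward_diff_eq_0_right[of 1]) (use assms in \<open>auto simp: field_simps\<close>)
  ultimately show ?case
    using summation_by_parts_backward_diff[of N ?E "N + k" w] assms(2) Suc.IH by simp
qed simp

lemma half_le_sin:
  assumes "0 \<le> x" "x \<le> pi / 2"
  shows "x / 2 \<le> sin x"
proof -
  have "\<bar>sin x - (\<Sum>m<3. sin_coeff m * x ^ m)\<bar> \<le> inverse (fact 3) * \<bar>x\<bar> ^ 3"
    by (rule Maclaurin_sin_bound)
  also have "(\<Sum>m<3. sin_coeff m * x ^ m) = x"
    by (simp add: eval_nat_numeral sin_coeff_def)
  finally have "\<bar>sin x - x\<bar> \<le> x ^ 3 / 6"
    using assms by (simp add: fact_numeral)
  then have "x - x ^ 3 / 6 \<le> sin x"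
    unfolding abs_le_iff by linarith
  moreover have "x * x \<le> 1.6 * 1.6"
    using assms pi_approx(2) by (intro mult_mono) auto
  then have "x ^ 3 \<le> 2.56 * x"
    using assms mult_left_mono[of "x * x" "1.6 * 1.6" x] by (simp add: power3_eq_cube mult_ac)
  ultimately show ?thesis using assms by simp
qed

text \<open>No range condition on t is needed: for |t| > 1 the hypothesis forces r < 0.\<close>

lemma norm_exp_2pi_minus_1_ge_circ_dist:
  fixes t r :: real
  assumes "r \<le> circ_dist t 0"
  shows "2 * r \<le> cmod (exp (2 * pi * \<i> * of_real t) - 1)"
proof (cases "r > 0")
  case True
  let ?u = "\<bar>t\<bar>"
  have u: "r \<le> ?u" "r \<le> 1 - ?u" using assms by (auto simp: circ_dist_def)
  have r_le: "r \<le> pi * v / 2" if "r \<le> v" for v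
  proof -
    have "3 * v \<le> pi * v"
      using that pi_gt3 True by (intro mult_right_mono) auto
    then show ?thesis using that True by linarith
  qed
  have "r \<le> sin (pi * ?u)"
  proof (cases "?u \<le> 1/2")
    case True
    then show ?thesis using half_le_sin[of "pi * ?u"] r_le[OF u(1)] by simp
  next
    case False
    have "sin (pi * ?u) = sin (pi * (1 - ?u))"
      by (simp add: sin_diff right_diff_distrib)
    moreover have "0 \<le> pi * (1 - ?u)"
      using u \<open>r > 0\<close> by simp
    ultimately show ?thesis using False half_le_sin[of "pi * (1 - ?u)"] r_le[OF u(2)] by simp
  qed
  also have "sin (pi * ?u) = \<bar>sin (2 * pi * t / 2)\<bar>"
  proof -
    have "0 \<le> sin (pi * ?u)"
      using u True by (intro sin_ge_zero) auto
    moreover have "sin (pi * ?u) = sin (pi * t) \<or> sin (pi * ?u) = - sin (pi * t)"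
      by (cases "t \<ge> 0") auto
    ultimately show ?thesis by auto
  qed
  also have "2 * \<dots> = cmod (exp (2 * pi * \<i> * of_real t) - 1)"
    using dist_exp_i_1[of "2 * pi * t"] by (simp add: mult_ac)
  finally show ?thesis by simp
next
  case False
  then show ?thesis
    using norm_ge_zero[of "exp (2 * pi * \<i> * of_real t) - 1"] by linarith
qed

definition deriv_sup :: "(real \<Rightarrow> real) \<Rightarrow> nat \<Rightarrow> real" where
  "deriv_sup f k = (SUP x. \<bar>(deriv ^^ k) f x\<bar>)"

lemma abs_higher_deriv_le_deriv_sup:
  assumes "Cc_inf_01 f"
  shows "\<bar>(deriv ^^ k) f x\<bar> \<le> deriv_sup f k"
proof -
  have "bounded (range ((deriv ^^ k) f))"
    using assms by (intro bounded_range_higher_deriv) (auto simp: Cc_inf_01_def)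
  then have "bdd_above (range (\<lambda>x. \<bar>(deriv ^^ k) f x\<bar>))"
    by (auto simp: bounded_iff bdd_above_def)
  then show ?thesis
    unfolding deriv_sup_def by (rule cSUP_upper2) auto
qed

lemma deriv_sup_nonneg: "Cc_inf_01 f \<Longrightarrow> 0 \<le> deriv_sup f k"
  using abs_higher_deriv_le_deriv_sup[of f k 0] by linarith

lemma deriv_sup_le:
  assumes "\<And>x. \<bar>(deriv ^^ k) f x\<bar> \<le> B"
  shows "deriv_sup f k \<le> B"
  unfolding deriv_sup_def by (rule cSUP_least) (use assms in auto)

definition decay_majorant :: "(real \<Rightarrow> real) \<Rightarrow> real \<Rightarrow> real" where
  "decay_majorant f x = (INF k. (real k + 1) * deriv_sup f k / (2 * x) ^ k)"

lemma decay_majorant_le: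
  assumes "Cc_inf_01 f" "x > 0"
  shows "decay_majorant f x \<le> (real k + 1) * deriv_sup f k / (2 * x) ^ k"
  unfolding decay_majorant_def
  by (rule cINF_lower) (use assms deriv_sup_nonneg in \<open>auto intro!: bdd_belowI[of _ 0]\<close>)

lemma le_decay_majorant:
  assumes "\<And>k. y \<le> (real k + 1) * deriv_sup f k / (2 * x) ^ k"
  shows "y \<le> decay_majorant f x"
  unfolding decay_majorant_def by (rule cINF_greatest) (use assms in auto)

lemma decay_majorant_nonneg:
  assumes "Cc_inf_01 f" "x > 0"
  shows "0 \<le> decay_majorant f x"
  by (rule le_decay_majorant) (use assms deriv_sup_nonneg in auto)

lemma norm_one_minus_power_mult_sum_le:
  fixes f :: "real \<Rightarrow> real" and w :: complex
  assumes "Cc_inf_01 f" "cmod w = 1" "N > 0"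
  shows "cmod (1 - w) ^ k * cmod (\<Sum>m<N. w ^ m * of_real (f (real m / real N)))
           \<le> real N * (real k + 1) * deriv_sup f k / real N ^ k"
proof -
  let ?D = "(backward_diff (1 / real N) ^^ k) f"
  have D: "\<bar>?D t\<bar> \<le> deriv_sup f k / real N ^ k" for t
    using abs_iterated_backward_diff_le[of f k "deriv_sup f k" "1 / real N" t]
      abs_higher_deriv_le_deriv_sup[OF assms(1)] assms(1)
    by (simp add: Cc_inf_01_def power_one_over)
  have "cmod (1 - w) ^ k * cmod (\<Sum>m<N. w ^ m * of_real (f (real m / real N)))
      = cmod (\<Sum>m<N + k. w ^ m * of_real (?D (real m / real N)))"
    using summation_by_parts_iterated_backward_diff[of f N w k] Cc_inf_01_eq_0[OF assms(1)] assms(3)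
    by (simp add: norm_mult norm_power)
  also have "\<dots> \<le> (\<Sum>m<N + k. deriv_sup f k / real N ^ k)"
    by (intro order_trans[OF norm_sum] sum_mono) (simp add: norm_mult norm_power assms(2) D)
  also have "\<dots> = real (N + k) * (deriv_sup f k / real N ^ k)"
    by simp
  also have "\<dots> \<le> real N * (real k + 1) * (deriv_sup f k / real N ^ k)"
  proof (rule mult_right_mono)
    have "1 * real k \<le> real N * real k"
      using assms(3) by (intro mult_right_mono) auto
    then show "real (N + k) \<le> real N * (real k + 1)"
      by (simp add: algebra_simps)
  qed (use deriv_sup_nonneg[OF assms(1)] in simp)
  finally show ?thesis by simp
qed

lemma norm_exp_sum_le_decay_majorant:
  fixes f :: "real \<Rightarrow> real" and N a :: nat
  assumes "Cc_inf_01 f" "0 < r" "r \<le> circ_dist (real a / real N) 0"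
  shows "cmod (\<Sum>m<N. exp (2 * pi * \<i> * of_nat a * of_nat m / of_nat N)
                        * of_real (f (real m / real N)))
           \<le> real N * decay_majorant f (real N * r)"
proof (cases "N = 0")
  case False
  define w where "w = exp (2 * pi * \<i> * of_real (real a / real N))"
  have w: "cmod w = 1"
    by (simp add: w_def)
  have "exp (2 * pi * \<i> * of_nat a * of_nat m / of_nat N) = w ^ m" for m
    by (simp add: w_def exp_of_nat_mult[symmetric] mult_ac)
  then have sum_eq: "(\<Sum>m<N. exp (2 * pi * \<i> * of_nat a * of_nat m / of_nat N)
                        * of_real (f (real m / real N)))
      = (\<Sum>m<N. w ^ m * of_real (f (real m / real N)))"
    by simp
  let ?S = "cmod (\<Sum>m<N. w ^ m * of_real (f (real m / real N)))"
  have "?S / real N \<le> (real k + 1) * deriv_sup f k / (2 * (real N * r)) ^ k" for k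
  proof -
    have "(2 * r) ^ k * ?S \<le> cmod (1 - w) ^ k * ?S"
      using norm_exp_2pi_minus_1_ge_circ_dist[OF assms(3)] assms(2)
      by (intro mult_right_mono power_mono) (auto simp: w_def norm_minus_commute)
    also have "\<dots> \<le> real N * (real k + 1) * deriv_sup f k / real N ^ k"
      by (rule norm_one_minus_power_mult_sum_le) (use assms w False in auto)
    finally show ?thesis
      using False assms(2) by (simp add: field_simps)
  qed
  then have "?S / real N \<le> decay_majorant f (real N * r)"
    by (rule le_decay_majorant)
  then show ?thesis
    using sum_eq False by (simp add: field_simps)
qed simp

lemma decay_majorant_rapid_decay:
  assumes "Cc_inf_01 f"
  shows "\<exists>C>0. \<forall>x>0. decay_majorant f x \<le> C * x powr (- real n)"
proof -
  let ?C = "(real n + 1) * deriv_sup f n / 2 ^ n"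
  have "decay_majorant f x \<le> (?C + 1) * x powr (- real n)" if "x > 0" for x
  proof -
    have "decay_majorant f x \<le> ?C * x powr (- real n)"
      using decay_majorant_le[OF assms that, of n] that
      by (simp add: powr_minus powr_realpow field_simps)
    also have "\<dots> \<le> (?C + 1) * x powr (- real n)"
      by (intro mult_right_mono) auto
    finally show ?thesis .
  qed
  moreover have "?C + 1 > 0"
    using deriv_sup_nonneg[OF assms, of n] by (simp add: add_nonneg_pos)
  ultimately show ?thesis by blast
qed

lemma Gevrey_c_01_deriv_sup_le:
  assumes "Gevrey_c_01 s f"
  obtains A where "A \<ge> 1" "\<And>k. deriv_sup f k \<le> A ^ (k + 1) * fact k powr s"
proof -
  let ?K = "closure {x. f x \<noteq> 0}"
  have "compact ?K"
    using assms by (simp add: Gevrey_c_01_def Cc_inf_01_def)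
  then obtain C where C: "\<forall>k. \<forall>x\<in>?K. \<bar>(deriv ^^ k) f x\<bar> \<le> C ^ (k + 1) * fact k powr s"
    using assms unfolding Gevrey_c_01_def by blast
  define A where "A = max 1 \<bar>C\<bar>"
  have "deriv_sup f k \<le> A ^ (k + 1) * fact k powr s" for k
  proof (rule deriv_sup_le)
    fix x
    have "C ^ (k + 1) \<le> \<bar>C\<bar> ^ (k + 1)"
      by (metis abs_ge_self power_abs)
    also have "\<dots> \<le> A ^ (k + 1)"
      by (rule power_mono) (auto simp: A_def)
    finally have bound: "C ^ (k + 1) * fact k powr s \<le> A ^ (k + 1) * fact k powr s"
      by (intro mult_right_mono) auto
    show "\<bar>(deriv ^^ k) f x\<bar> \<le> A ^ (k + 1) * fact k powr s"
    proof (cases "x \<in> ?K")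
      case True
      then show ?thesis using C bound by (meson order_trans)
    next
      case False
      then show ?thesis using higher_deriv_eq_0_outside_support by (simp add: A_def)
    qed
  qed
  then show ?thesis
    using that[of A] by (simp add: A_def)
qed

lemma fact_powr_le_power_powr:
  assumes "s \<ge> 0"
  shows "(fact k :: real) powr s \<le> (real k powr s) ^ k"
proof (cases "k = 0")
  case False
  have "(fact k :: real) powr s \<le> (real k ^ k) powr s"
    using fact_le_power[of k, where 'a=real] assms by (intro powr_mono2) auto
  also have "\<dots> = (real k powr s) ^ k"
    using False by (simp add: powr_realpow[symmetric] powr_powr mult.commute)
  finally show ?thesis .
qed simp

lemma Gevrey_term_le_exp:
  fixes A s x :: real
  assumes "A \<ge> 1" "s \<ge> 0" "x > 0" "real k powr s \<le> 2 * x * exp (- 2) / A"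
  shows "(real k + 1) * (A ^ (k + 1) * fact k powr s) / (2 * x) ^ k \<le> A * exp (- real k)"
proof -
  have "fact k powr s \<le> (2 * x * (exp (- 2) / A)) ^ k"
    by (rule order_trans[OF fact_powr_le_power_powr[OF assms(2)] power_mono])
       (use assms(4) in \<open>simp_all add: mult_ac\<close>)
  then have "(real k + 1) * (A ^ (k + 1) * fact k powr s) / (2 * x) ^ k
        \<le> (real k + 1) * (A ^ (k + 1) * (2 * x * (exp (- 2) / A)) ^ k) / (2 * x) ^ k"
    using assms(1,3) by (intro divide_right_mono mult_left_mono) auto
  also have "\<dots> = A * ((real k + 1) * exp (- real k)) * exp (- real k)"
  proof -
    have "exp (- 2) ^ k = exp (- real k) * exp (- real k)"
      by (simp add: exp_of_nat_mult[symmetric] exp_add[symmetric])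
    then show ?thesis
      using assms(1,3) by (simp add: power_mult_distrib power_divide)
  qed
  also have "\<dots> \<le> A * 1 * exp (- real k)"
    using exp_ge_add_one_self[of "real k"] assms(1)
    by (intro mult_right_mono mult_left_mono) (auto simp: exp_minus field_simps)
  finally show ?thesis by simp
qed

lemma exists_Gevrey_term_le_exp:
  fixes A s :: real
  assumes "A \<ge> 1" "s > 0"
  shows "\<exists>C>0. \<exists>c>0. \<forall>x>0. \<exists>k.
           (real k + 1) * (A ^ (k + 1) * fact k powr s) / (2 * x) ^ k \<le> C * exp (- c * x powr (1 / s))"
proof -
  define Q where "Q = 2 * exp (- 2) / A"
  define c where "c = Q powr (1 / s)"
  have Q: "Q > 0"
    using assms(1) by (simp add: Q_def)
  have "\<exists>k. (real k + 1) * (A ^ (k + 1) * fact k powr s) / (2 * x) ^ k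
          \<le> A * exp 1 * exp (- c * x powr (1 / s))" if x: "x > 0" for x
  proof
    define k where "k = nat \<lfloor>c * x powr (1 / s)\<rfloor>"
    have k: "real k \<le> c * x powr (1 / s)" "c * x powr (1 / s) < real k + 1"
      using Q x by (simp_all add: k_def c_def)
    have "real k powr s \<le> (c * x powr (1 / s)) powr s"
      using k(1) assms(2) by (intro powr_mono2) auto
    also have "\<dots> = Q * x"
      using Q x assms(2) by (simp add: c_def powr_mult[symmetric] powr_powr)
    finally have "(real k + 1) * (A ^ (k + 1) * fact k powr s) / (2 * x) ^ k \<le> A * exp (- real k)"
      using Gevrey_term_le_exp[OF assms(1) _ x] assms(2) by (simp add: Q_def mult_ac)
    also have "\<dots> \<le> A * exp 1 * exp (- c * x powr (1 / s))"
      using k(2) assms(1) by (simp add: exp_add[symmetric])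
    finally show "(real k + 1) * (A ^ (k + 1) * fact k powr s) / (2 * x) ^ k
        \<le> A * exp 1 * exp (- c * x powr (1 / s))" .
  qed
  moreover have "A * exp 1 > 0" "c > 0"
    using assms(1) Q by (auto simp: c_def)
  ultimately show ?thesis by blast
qed

lemma decay_majorant_Gevrey_decay:
  assumes "Gevrey_c_01 s f" "s > 0"
  shows "\<exists>C>0. \<exists>c>0. \<forall>x>0. decay_majorant f x \<le> C * exp (- c * x powr (1 / s))"
proof -
  obtain A where A: "A \<ge> 1" "\<And>k. deriv_sup f k \<le> A ^ (k + 1) * fact k powr s"
    using Gevrey_c_01_deriv_sup_le[OF assms(1)] by blast
  obtain C c where "C > 0" "c > 0" and Cc: "\<And>x. x > 0 \<Longrightarrow> \<exists>k.
      (real k + 1) * (A ^ (k + 1) * fact k powr s) / (2 * x) ^ k \<le> C * exp (- c * x powr (1 / s))"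
    using exists_Gevrey_term_le_exp[OF A(1) assms(2)] by blast
  have "decay_majorant f x \<le> C * exp (- c * x powr (1 / s))" if "x > 0" for x
  proof -
    from Cc[OF that] obtain k where k: "(real k + 1) * (A ^ (k + 1) * fact k powr s) / (2 * x) ^ k
        \<le> C * exp (- c * x powr (1 / s))" ..
    have "decay_majorant f x \<le> (real k + 1) * deriv_sup f k / (2 * x) ^ k"
      using decay_majorant_le assms(1) that by (simp add: Gevrey_c_01_def)
    also have "\<dots> \<le> (real k + 1) * (A ^ (k + 1) * fact k powr s) / (2 * x) ^ k"
      using A(2) that by (intro divide_right_mono mult_left_mono) auto
    finally show ?thesis using k by linarith
  qed
  with \<open>C > 0\<close> \<open>c > 0\<close> show ?thesis by blast
qed

theorem lemma1:
  fixes chi :: "real \<Rightarrow> real"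
  assumes "Cc_inf_01 chi"
  shows "\<exists>g :: real \<Rightarrow> real. (\<forall>x>0. g x \<ge> 0) \<and>
    (\<forall>(N::nat) (a::nat) (r::real). a < N \<and> 0 < r \<and> r < 1/2 \<and>
        circ_dist (real a / real N) 0 \<ge> r \<longrightarrow>
        cmod (\<Sum>m<N. exp (2 * pi * \<i> * of_nat a * of_nat m / of_nat N)
                        * complex_of_real (chi (real m / real N)))
          \<le> real N * g (real N * r)) \<and>
    (\<forall>n::nat. \<exists>C>0. \<forall>x>0. g x \<le> C * x powr (- real n)) \<and>
    (\<forall>s>1. Gevrey_c_01 s chi \<longrightarrow>
        (\<exists>C>0. \<exists>c>0. \<forall>x>0. g x \<le> C * exp (- c * x powr (1 / s))))"
proof (intro exI[of _ "decay_majorant chi"] conjI allI impI)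
  show "0 \<le> decay_majorant chi x" if "x > 0" for x
    using decay_majorant_nonneg[OF assms that] .
  show "cmod (\<Sum>m<N. exp (2 * pi * \<i> * of_nat a * of_nat m / of_nat N)
                        * complex_of_real (chi (real m / real N)))
          \<le> real N * decay_majorant chi (real N * r)"
    if "a < N \<and> 0 < r \<and> r < 1/2 \<and> circ_dist (real a / real N) 0 \<ge> r" for N a r
    using norm_exp_sum_le_decay_majorant[OF assms] that by blast
  show "\<exists>C>0. \<forall>x>0. decay_majorant chi x \<le> C * x powr (- real n)" for n
    using decay_majorant_rapid_decay[OF assms] .
  show "\<exists>C>0. \<exists>c>0. \<forall>x>0. decay_majorant chi x \<le> C * exp (- c * x powr (1 / s))"
    if "s > 1" "Gevrey_c_01 s chi" for s
    using decay_majorant_Gevrey_decay[OF that(2)] that(1) by simp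
qed

end
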